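(* Let $P=\{p_1,\dots,p_n\}$ be weighted points in $\mathbb{R}^2$ with total weight $1$, let $S=\{s_1,\dots,s_m\}$ be line segments in $\mathbb{R}^2$ of total length $1$, let $\delta>0$, and let $Q$ be the set of subsegments produced by the subdivision procedure in the context. Then $|Q|=O\!\left(\frac{nm}{\delta}\log\frac1\delta\right)$.
   Context: Subdivision procedure: starting with the segments of $S$, repeatedly, for each current subsegment $s'$: if there is a point of $P$ such that all of $s'$ lies within Euclidean distance $\delta/(nm)$ of it, leave $s'$ as is; otherwise, if there is a point $p\in P$ for which the ratio between the largest and the smallest distance from $p$ to points of $s'$ exceeds $1+\delta$, cut $s'$ into two halves. $Q$ is the final set of subsegments. *)

theory Defs
  imports "HOL-Analysis.Analysis"
begin

definition seg_near :: "real^2 \<Rightarrow> real \<Rightarrow> real^2 \<Rightarrow> real^2 \<Rightarrow> bool" where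
  "seg_near p r a b \<longleftrightarrow> (\<forall>x\<in>closed_segment a b. dist p x \<le> r)"

text \<open>Ratio between largest and smallest distance from p to points of [a,b] exceeds 1+delta
  (written multiplicatively, so a zero smallest distance counts as an infinite ratio).\<close>
definition ratio_exceeds :: "real^2 \<Rightarrow> real \<Rightarrow> real^2 \<Rightarrow> real^2 \<Rightarrow> bool" where
  "ratio_exceeds p \<delta> a b \<longleftrightarrow>
     (SUP x\<in>closed_segment a b. dist p x) > (1 + \<delta>) * (INF x\<in>closed_segment a b. dist p x)"

definition cut_piece :: "(real^2) set \<Rightarrow> real \<Rightarrow> real \<Rightarrow> real^2 \<Rightarrow> real^2 \<Rightarrow> bool" where
  "cut_piece P r \<delta> a b \<longleftrightarrow>
     \<not> (\<exists>p\<in>P. seg_near p r a b) \<and> (\<exists>p\<in>P. ratio_exceeds p \<delta> a b)"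

inductive pieces :: "(real^2) set \<Rightarrow> real \<Rightarrow> real \<Rightarrow> real^2 \<Rightarrow> real^2 \<Rightarrow> real^2 \<Rightarrow> real^2 \<Rightarrow> bool"
  for P r \<delta> a0 b0 where
  start: "pieces P r \<delta> a0 b0 a0 b0"
| left: "pieces P r \<delta> a0 b0 a b \<Longrightarrow> cut_piece P r \<delta> a b \<Longrightarrow> pieces P r \<delta> a0 b0 a (midpoint a b)"
| right: "pieces P r \<delta> a0 b0 a b \<Longrightarrow> cut_piece P r \<delta> a b \<Longrightarrow> pieces P r \<delta> a0 b0 (midpoint a b) b"

definition final_pieces :: "(real^2) set \<Rightarrow> real \<Rightarrow> real \<Rightarrow> real^2 \<Rightarrow> real^2 \<Rightarrow> ((real^2) \<times> (real^2)) set" where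
  "final_pieces P r \<delta> a0 b0 = {(a, b). pieces P r \<delta> a0 b0 a b \<and> \<not> cut_piece P r \<delta> a b}"

end

theory Submission
  imports Defs
begin

(* Every subsegment produced from a segment s is a dyadic piece of s of some level k, of
   length |s|/2^k, whose parent piece of level k-1 was cut.  A cut piece of length l has a
   point within distance l/delta of some p in P (otherwise the distances from p vary by at
   most the factor 1+delta), and for a fixed p only O(1/delta) pieces of one level come that
   close; so every level has O(n/delta) cut pieces and at most A = O(n/delta) pieces.
   A cut piece is also not within delta/(nm) of any point of P, which bounds its length
   from below, so only levels with 2^k < B = O(nm|s|/delta^2) occur.  Summing min(2^k, A)
   over these levels gives O(A (1 + log (B/A))) = O((n/delta) (1 + m|s| + log (1/delta)))
   pieces for s, and the segments have total length 1. *)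

lemma card_nat_in_real_interval:
  assumes "S \<subseteq> {i::nat. lo \<le> real i \<and> real i \<le> hi}"
  shows "finite S" "real (card S) \<le> max 0 (hi - lo + 1)"
proof -
  have S: "S \<subseteq> {nat \<lceil>lo\<rceil> .. nat \<lfloor>hi\<rfloor>}"
    using assms by (auto simp: nat_le_iff le_nat_iff ceiling_le_iff le_floor_iff)
  then show "finite S"
    using finite_subset by blast
  show "real (card S) \<le> max 0 (hi - lo + 1)"
  proof (cases "S = {}")
    case False
    then obtain i where "lo \<le> real i" "real i \<le> hi"
      using assms by auto
    then have "real (nat \<lfloor>hi\<rfloor> + 1 - nat \<lceil>lo\<rceil>) \<le> hi - lo + 1"
      by linarith
    moreover have "card S \<le> nat \<lfloor>hi\<rfloor> + 1 - nat \<lceil>lo\<rceil>"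
      using card_mono[OF _ S] by simp
    ultimately show ?thesis
      by (smt (verit) of_nat_le_iff)
  qed simp
qed

lemma powers_of_two_between:
  assumes "0 < A"
  shows "finite {k::nat. A < 2^k \<and> 2^k < B}"
    and "real (card {k::nat. A < 2^k \<and> 2^k < B}) \<le> max 0 (log 2 (B / A) + 1)"
proof -
  have sub: "{k::nat. A < 2^k \<and> 2^k < B} \<subseteq> {k. log 2 A \<le> real k \<and> real k \<le> log 2 B}"
  proof safe
    fix k :: nat
    assume k: "A < 2^k" "2^k < B"
    have "0 < B"
      using assms k by simp
    with assms k show "log 2 A \<le> real k" "real k \<le> log 2 B"
      by (simp_all add: log_le_iff le_log_iff powr_realpow)
  qed
  then show "finite {k::nat. A < 2^k \<and> 2^k < B}"
    by (rule card_nat_in_real_interval(1))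
  show "real (card {k::nat. A < 2^k \<and> 2^k < B}) \<le> max 0 (log 2 (B / A) + 1)"
  proof (cases "A < B")
    case True
    with assms have "log 2 B - log 2 A = log 2 (B / A)"
      by (simp add: log_divide)
    with card_nat_in_real_interval(2)[OF sub] show ?thesis by simp
  next
    case False
    then have "{k::nat. A < 2^k \<and> 2^k < B} = {}" by auto
    then show ?thesis by (simp only: card.empty)
  qed
qed

lemma sum_powers_of_two_le:
  assumes "finite S" "\<And>k. k \<in> S \<Longrightarrow> (2::real)^k \<le> A" "0 \<le> A"
  shows "(\<Sum>k\<in>S. (2::real)^k) \<le> 2 * A"
proof (cases "S = {}")
  case False
  have "(\<Sum>k\<in>S. (2::real)^k) \<le> (\<Sum>k\<le>Max S. 2^k)"
    using assms(1) by (intro sum_mono2) auto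
  also have "\<dots> = 2 * 2^Max S - 1"
    by (induction ("Max S")) auto
  also have "2^Max S \<le> A"
    using False assms by simp
  finally show ?thesis by simp
qed (use assms in simp)

lemma sum_le_capped_powers_of_two:
  fixes c :: "nat \<Rightarrow> real"
  assumes A: "0 < A"
    and small: "\<And>k. c k \<le> 2^k"
    and large: "\<And>k. A < 2^k \<Longrightarrow> c k \<le> (if 2^k < B then A else 0)"
  shows "(\<Sum>k\<le>N. c k) \<le> A * (2 + max 0 (log 2 (B / A) + 1))"
proof -
  let ?S = "{k\<in>{..N}. (2::real)^k \<le> A}" and ?L = "{k\<in>{..N}. A < 2^k \<and> 2^k < B}"
  have "(\<Sum>k\<le>N. c k) \<le> (\<Sum>k\<le>N. (if 2^k \<le> A then 2^k else 0) + (if A < 2^k \<and> 2^k < B then A else 0))"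
    using small large by (intro sum_mono) (smt (verit))
  also have "\<dots> = (\<Sum>k\<in>?S. 2^k) + A * real (card ?L)"
    by (simp add: sum.distrib sum.inter_filter[symmetric])
  also have "(\<Sum>k\<in>?S. 2^k) \<le> 2 * A"
    using A by (intro sum_powers_of_two_le) auto
  also have "real (card ?L) \<le> real (card {k::nat. A < 2^k \<and> 2^k < B})"
    using powers_of_two_between(1)[OF A] by (auto intro!: card_mono)
  also have "\<dots> \<le> max 0 (log 2 (B / A) + 1)"
    by (rule powers_of_two_between(2)[OF A])
  finally show ?thesis
    using A by (simp add: algebra_simps mult_left_mono)
qed

lemma dist_linepath: "dist (linepath a b s) (linepath a b t) = \<bar>s - t\<bar> * dist a b"
proof -
  have "linepath a b s - linepath a b t = (s - t) *\<^sub>R (b - a)"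
    by (simp add: linepath_def algebra_simps)
  then show ?thesis
    by (simp add: dist_norm norm_minus_commute)
qed

lemma linepath_linepath: "linepath (linepath a b s) (linepath a b t) u = linepath a b (linepath s t u)"
  by (simp add: linepath_def algebra_simps)

lemma closed_segment_linepath:
  "closed_segment (linepath a b s) (linepath a b t) = linepath a b ` closed_segment s t"
  by (simp add: linepath_image_01[symmetric] image_image linepath_linepath)

lemma linepath_conv_add: "linepath a b t = a + t *\<^sub>R (b - a)"
  by (simp add: linepath_def algebra_simps)

lemma midpoint_linepath: "midpoint (linepath a b s) (linepath a b t) = linepath a b ((s + t) / 2)"
  unfolding midpoint_def linepath_conv_add by (simp add: algebra_simps flip: scaleR_add_left)

definition dyadic_point :: "'a::real_normed_vector \<Rightarrow> 'a \<Rightarrow> nat \<Rightarrow> nat \<Rightarrow> 'a" where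
  "dyadic_point a b k i = linepath a b (real i / 2^k)"

lemma dyadic_point_double: "dyadic_point a b (Suc k) (2 * i) = dyadic_point a b k i"
  by (simp add: dyadic_point_def)

lemma midpoint_dyadic_point:
  "midpoint (dyadic_point a b k i) (dyadic_point a b k (Suc i)) = dyadic_point a b (Suc k) (Suc (2 * i))"
proof -
  have "(real i / 2^k + real (Suc i) / 2^k) / 2 = real (Suc (2 * i)) / 2^Suc k"
    by (simp add: field_simps)
  then show ?thesis
    by (simp only: dyadic_point_def midpoint_linepath)
qed

lemma dist_dyadic_point: "dist (dyadic_point a b k i) (dyadic_point a b k (Suc i)) = dist a b / 2^k"
proof -
  have "\<bar>real i / 2^k - real (Suc i) / 2^k\<bar> = 1 / 2^k"
    by (simp add: field_simps)
  then show ?thesis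
    by (simp add: dyadic_point_def dist_linepath)
qed

lemma closed_segment_dyadic_point:
  "closed_segment (dyadic_point a b k i) (dyadic_point a b k (Suc i))
     = linepath a b ` {real i / 2^k .. real (Suc i) / 2^k}"
  by (simp add: dyadic_point_def closed_segment_linepath closed_segment_eq_real_ivl divide_right_mono)

lemma card_dyadic_pieces_meeting_ball:
  fixes a b p :: "'a::real_normed_vector" and k :: nat and \<rho> :: real
  assumes "a \<noteq> b" "0 \<le> \<rho>"
  defines "I \<equiv> {i. closed_segment (dyadic_point a b k i) (dyadic_point a b k (Suc i)) \<inter> ball p \<rho> \<noteq> {}}"
  shows "finite I" "real (card I) \<le> 4 * 2^k * \<rho> / dist a b + 2"
proof -
  have param: "\<exists>t. real i \<le> 2^k * t \<and> 2^k * t \<le> real i + 1 \<and> dist p (linepath a b t) < \<rho>"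
    if i: "i \<in> I" for i
  proof -
    obtain t where "real i / 2^k \<le> t" "t \<le> real (Suc i) / 2^k" "dist p (linepath a b t) < \<rho>"
      using i unfolding I_def closed_segment_dyadic_point by auto
    then show ?thesis
      by (auto simp: pos_divide_le_eq pos_le_divide_eq mult.commute)
  qed
  have "finite I \<and> real (card I) \<le> 4 * 2^k * \<rho> / dist a b + 2"
  proof (cases "I = {}")
    case True
    have "0 \<le> 4 * 2^k * \<rho> / dist a b"
      using assms(2) by simp
    with True show ?thesis
      by simp
  next
    case False
    then obtain t0 where t0: "dist p (linepath a b t0) < \<rho>"
      using param by blast
    define w where "w = 2^k * (2 * \<rho> / dist a b)"
    have "I \<subseteq> {i. 2^k * t0 - w - 1 \<le> real i \<and> real i \<le> 2^k * t0 + w}"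
    proof safe
      fix i
      assume "i \<in> I"
      then obtain t where t: "real i \<le> 2^k * t" "2^k * t \<le> real i + 1" "dist p (linepath a b t) < \<rho>"
        using param by blast
      have "\<bar>t - t0\<bar> * dist a b < 2 * \<rho>"
        using dist_triangle3[of "linepath a b t" "linepath a b t0" p] t(3) t0
        by (simp add: dist_linepath)
      then have "\<bar>t - t0\<bar> < 2 * \<rho> / dist a b"
        using assms by (simp add: pos_less_divide_eq)
      then have "2^k * \<bar>t - t0\<bar> < w"
        unfolding w_def by (rule mult_strict_left_mono) simp_all
      then have "\<bar>2^k * t - 2^k * t0\<bar> < w"
        by (simp add: abs_mult flip: right_diff_distrib)
      with t show "2^k * t0 - w - 1 \<le> real i" "real i \<le> 2^k * t0 + w"
        by linarith+
    qed
    note interval = card_nat_in_real_interval[OF this]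
    have "0 \<le> w"
      using assms(2) by (simp add: w_def)
    then have "max 0 (2^k * t0 + w - (2^k * t0 - w - 1) + 1) = 2 * w + 2"
      by simp
    moreover have "2 * w = 4 * 2^k * \<rho> / dist a b"
      unfolding w_def by simp
    ultimately show ?thesis
      using interval by simp
  qed
  then show "finite I" "real (card I) \<le> 4 * 2^k * \<rho> / dist a b + 2"
    by simp_all
qed

lemma dist_le_of_mem_closed_segment:
  fixes a b :: "'a::euclidean_space"
  assumes "x \<in> closed_segment a b" "y \<in> closed_segment a b"
  shows "dist x y \<le> dist a b"
  by (metis assms dist_commute dist_decreases_closed_segment dist_in_closed_segment order_trans)

lemma ratio_exceeds_imp_close:
  assumes "0 < \<delta>" "ratio_exceeds p \<delta> a b"
  shows "\<exists>x\<in>closed_segment a b. dist p x < dist a b / \<delta>"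
proof (rule ccontr)
  assume "\<not> ?thesis"
  then have far: "dist a b \<le> \<delta> * dist p x" if "x \<in> closed_segment a b" for x
    using that assms(1) by (auto simp: not_less pos_divide_le_eq mult.commute)
  have ne: "closed_segment a b \<noteq> {}"
    by auto
  have "dist p y \<le> (1 + \<delta>) * dist p x" if "x \<in> closed_segment a b" "y \<in> closed_segment a b" for x y
    using dist_triangle[of p y x] dist_le_of_mem_closed_segment[OF that] far[OF that(1)]
    by (simp add: dist_commute algebra_simps)
  then have "(SUP y\<in>closed_segment a b. dist p y) \<le> (1 + \<delta>) * dist p x" if "x \<in> closed_segment a b" for x
    using that by (intro cSUP_least[OF ne]) auto
  then have "(SUP y\<in>closed_segment a b. dist p y) / (1 + \<delta>) \<le> (INF x\<in>closed_segment a b. dist p x)"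
    using assms(1) by (intro cINF_greatest[OF ne]) (auto simp: pos_divide_le_eq mult.commute)
  with assms show False
    unfolding ratio_exceeds_def by (simp add: pos_divide_le_eq mult.commute)
qed

lemma cut_piece_imp_close:
  assumes "0 < \<delta>" "cut_piece P r \<delta> a b"
  shows "\<exists>p\<in>P. closed_segment a b \<inter> ball p (dist a b / \<delta>) \<noteq> {}"
  using assms ratio_exceeds_imp_close unfolding cut_piece_def by fastforce

lemma cut_piece_imp_radius_less:
  assumes "0 < \<delta>" "cut_piece P r \<delta> a b"
  shows "r * \<delta> < (1 + \<delta>) * dist a b"
proof -
  obtain p where p: "p \<in> P" "ratio_exceeds p \<delta> a b"
    using assms(2) unfolding cut_piece_def by blast
  obtain x0 where x0: "x0 \<in> closed_segment a b" "dist p x0 < dist a b / \<delta>"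
    using ratio_exceeds_imp_close[OF assms(1) p(2)] by blast
  obtain x where x: "x \<in> closed_segment a b" "r < dist p x"
    using assms(2) p(1) unfolding cut_piece_def seg_near_def by (auto simp: not_le)
  have "r < dist a b / \<delta> + dist a b"
    using dist_triangle[of p x x0] dist_le_of_mem_closed_segment[OF x0(1) x(1)] x(2) x0(2) by linarith
  then show ?thesis
    using assms(1) by (simp add: field_simps)
qed

context
  fixes P :: "(real^2) set" and r \<delta> :: real and a0 b0 :: "real^2"
begin

definition cut_indices :: "nat \<Rightarrow> nat set" where
  "cut_indices k =
     {i. i < 2^k \<and> cut_piece P r \<delta> (dyadic_point a0 b0 k i) (dyadic_point a0 b0 k (Suc i))}"

(* Only the parent being cut is recorded, so this over-approximates the pieces of level k. *)
primrec level_indices :: "nat \<Rightarrow> nat set" where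
  "level_indices 0 = {0}"
| "level_indices (Suc k) = {i. i div 2 \<in> cut_indices k}"

lemma level_indices_subset: "level_indices k \<subseteq> {..<2^k}"
  by (cases k) (auto simp: cut_indices_def)

lemma finite_level_indices: "finite (level_indices k)"
  using level_indices_subset finite_subset by blast

lemma card_level_indices_le: "card (level_indices k) \<le> 2^k"
  using card_mono[OF _ level_indices_subset] by fastforce

lemma card_level_indices_Suc: "card (level_indices (Suc k)) \<le> 2 * card (cut_indices k)"
proof -
  have fin: "finite (cut_indices k)"
    by (rule finite_subset[of _ "{..<2^k}"]) (auto simp: cut_indices_def)
  have "level_indices (Suc k) = (\<Union>j\<in>cut_indices k. {2 * j, Suc (2 * j)})"
    by auto
  also have "card \<dots> \<le> (\<Sum>j\<in>cut_indices k. card {2 * j, Suc (2 * j)})"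
    using fin by (rule card_UN_le)
  also have "\<dots> = 2 * card (cut_indices k)"
    by simp
  finally show ?thesis .
qed

lemma card_cut_indices:
  assumes "finite P" "0 < \<delta>"
  shows "real (card (cut_indices k)) \<le> real (card P) * (4 / \<delta> + 2)"
proof (cases "a0 = b0")
  case True
  then have "\<not> cut_piece P r \<delta> (dyadic_point a0 b0 k i) (dyadic_point a0 b0 k (Suc i))" for i
    using cut_piece_imp_close[OF assms(2)] by (fastforce simp: dist_dyadic_point)
  then have "cut_indices k = {}"
    by (simp add: cut_indices_def)
  then show ?thesis
    using assms(2) by simp
next
  case False
  define \<rho> where "\<rho> = dist a0 b0 / 2^k / \<delta>"
  define near where "near p = {i. closed_segment (dyadic_point a0 b0 k i) (dyadic_point a0 b0 k (Suc i))
                                   \<inter> ball p \<rho> \<noteq> {}}" for p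
  have \<rho>: "0 \<le> \<rho>"
    using assms(2) by (simp add: \<rho>_def)
  have "cut_indices k \<subseteq> (\<Union>p\<in>P. near p)"
    using cut_piece_imp_close[OF assms(2)]
    by (fastforce simp: cut_indices_def near_def \<rho>_def dist_dyadic_point)
  then have "card (cut_indices k) \<le> card (\<Union>p\<in>P. near p)"
    using card_dyadic_pieces_meeting_ball(1)[OF False \<rho>] assms(1)
    by (intro card_mono) (auto simp: near_def)
  also have "\<dots> \<le> (\<Sum>p\<in>P. card (near p))"
    using assms(1) by (rule card_UN_le)
  finally have "real (card (cut_indices k)) \<le> (\<Sum>p\<in>P. real (card (near p)))"
    by (metis of_nat_le_iff of_nat_sum)
  also have "\<dots> \<le> (\<Sum>p\<in>P. 4 * 2^k * \<rho> / dist a0 b0 + 2)"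
    using card_dyadic_pieces_meeting_ball(2)[OF False \<rho>] by (intro sum_mono) (simp add: near_def)
  also have "4 * 2^k * \<rho> / dist a0 b0 = 4 / \<delta>"
    using False by (simp add: \<rho>_def)
  finally show ?thesis
    by simp
qed

lemma level_indices_Suc_nonempty:
  assumes "0 < \<delta>" "level_indices (Suc k) \<noteq> {}"
  shows "r * \<delta> * 2^k < (1 + \<delta>) * dist a0 b0"
proof -
  obtain i where "cut_piece P r \<delta> (dyadic_point a0 b0 k i) (dyadic_point a0 b0 k (Suc i))"
    using assms(2) by (auto simp: cut_indices_def)
  from cut_piece_imp_radius_less[OF assms(1) this]
  show ?thesis
    by (simp add: dist_dyadic_point field_simps)
qed

lemma levels_eventually_empty:
  assumes "0 < r" "0 < \<delta>"
  obtains N where "\<And>k. N < k \<Longrightarrow> level_indices k = {}"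
proof -
  obtain N where N: "(1 + \<delta>) * dist a0 b0 / (r * \<delta>) < 2^N"
    using real_arch_pow[of 2] by auto
  have empty: "level_indices (Suc k) = {}" if "N \<le> k" for k
  proof (rule ccontr)
    assume "level_indices (Suc k) \<noteq> {}"
    from level_indices_Suc_nonempty[OF assms(2) this]
    have "2^k < (1 + \<delta>) * dist a0 b0 / (r * \<delta>)"
      using assms by (simp add: pos_less_divide_eq mult.commute)
    moreover have "(2::real)^N \<le> 2^k"
      using that by simp
    ultimately show False
      using N by linarith
  qed
  show ?thesis
  proof (rule that)
    fix k
    assume "N < k"
    then obtain k' where "k = Suc k'" "N \<le> k'"
      by (cases k) auto
    then show "level_indices k = {}"
      using empty by simp
  qed
qed

lemma pieces_imp_level_indices:
  assumes "pieces P r \<delta> a0 b0 a b"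
  shows "\<exists>k. \<exists>i\<in>level_indices k. a = dyadic_point a0 b0 k i \<and> b = dyadic_point a0 b0 k (Suc i)"
  using assms
proof induction
  case start
  show ?case
    by (rule exI[of _ 0]) (simp add: dyadic_point_def linepath_def)
next
  case (left a b)
  then obtain k i where "i \<in> cut_indices k" "a = dyadic_point a0 b0 k i" "b = dyadic_point a0 b0 k (Suc i)"
    using level_indices_subset by (fastforce simp: cut_indices_def)
  then show ?case
    by (intro exI[of _ "Suc k"] bexI[of _ "2 * i"]) (simp_all add: dyadic_point_double midpoint_dyadic_point)
next
  case (right a b)
  then obtain k i where "i \<in> cut_indices k" "a = dyadic_point a0 b0 k i" "b = dyadic_point a0 b0 k (Suc i)"
    using level_indices_subset by (fastforce simp: cut_indices_def)
  moreover have "dyadic_point a0 b0 (Suc k) (Suc (Suc (2 * i))) = dyadic_point a0 b0 k (Suc i)"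
    using dyadic_point_double[of a0 b0 k "Suc i"] by simp
  ultimately show ?case
    by (intro exI[of _ "Suc k"] bexI[of _ "Suc (2 * i)"]) (simp_all add: midpoint_dyadic_point)
qed

lemma card_level_indices_Suc_le:
  assumes "finite P" "0 < r" "0 < \<delta>"
  shows "real (card (level_indices (Suc k)))
           \<le> (if 2^Suc k < 2 * (1 + \<delta>) * dist a0 b0 / (r * \<delta>) then 2 * real (card P) * (4 / \<delta> + 2) else 0)"
proof (cases "level_indices (Suc k) = {}")
  case False
  have "real (card (level_indices (Suc k))) \<le> 2 * real (card (cut_indices k))"
    using card_level_indices_Suc[of k] by simp
  also have "\<dots> \<le> 2 * real (card P) * (4 / \<delta> + 2)"
    using card_cut_indices[OF assms(1,3), of k] by simp
  finally show ?thesis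
    using level_indices_Suc_nonempty[OF assms(3) False] assms(2,3)
    by (simp add: pos_less_divide_eq algebra_simps)
next
  case True
  have "0 \<le> 2 * real (card P) * (4 / \<delta> + 2)"
    using assms(3) by (simp add: add_nonneg_nonneg)
  with True show ?thesis
    by simp
qed

lemma card_final_pieces_le_levels:
  assumes "0 < r" "0 < \<delta>"
  obtains N where "finite (final_pieces P r \<delta> a0 b0)"
    and "card (final_pieces P r \<delta> a0 b0) \<le> (\<Sum>k\<le>N. card (level_indices k))"
proof -
  obtain N where N: "\<And>k. N < k \<Longrightarrow> level_indices k = {}"
    using levels_eventually_empty[OF assms] by blast
  let ?piece = "\<lambda>(k, i). (dyadic_point a0 b0 k i, dyadic_point a0 b0 k (Suc i))"
  have sub: "final_pieces P r \<delta> a0 b0 \<subseteq> ?piece ` Sigma {..N} level_indices"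
  proof safe
    fix a b
    assume "(a, b) \<in> final_pieces P r \<delta> a0 b0"
    then have "pieces P r \<delta> a0 b0 a b"
      by (simp add: final_pieces_def)
    then obtain k i where "i \<in> level_indices k" "a = dyadic_point a0 b0 k i" "b = dyadic_point a0 b0 k (Suc i)"
      using pieces_imp_level_indices by blast
    moreover from this N have "k \<le> N"
      by (metis empty_iff not_le)
    ultimately show "(a, b) \<in> ?piece ` Sigma {..N} level_indices"
      by force
  qed
  have fin: "finite (Sigma {..N} level_indices)"
    by (simp add: finite_level_indices)
  have "card (final_pieces P r \<delta> a0 b0) \<le> card (Sigma {..N} level_indices)"
    using card_mono[OF _ sub] card_image_le[of _ ?piece] fin by (meson finite_imageI le_trans)
  also have "\<dots> = (\<Sum>k\<le>N. card (level_indices k))"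
    by (simp add: card_SigmaI finite_level_indices)
  finally show thesis
    using that sub fin finite_subset by blast
qed

lemma final_pieces_bound:
  assumes "finite P" "P \<noteq> {}" "0 < r" "0 < \<delta>"
  defines "A \<equiv> 2 * real (card P) * (4 / \<delta> + 2)"
    and "B \<equiv> 2 * (1 + \<delta>) * dist a0 b0 / (r * \<delta>)"
  shows "finite (final_pieces P r \<delta> a0 b0)"
    and "real (card (final_pieces P r \<delta> a0 b0)) \<le> A * (2 + max 0 (log 2 (B / A) + 1))"
proof -
  obtain N where fin: "finite (final_pieces P r \<delta> a0 b0)"
    and card: "card (final_pieces P r \<delta> a0 b0) \<le> (\<Sum>k\<le>N. card (level_indices k))"
    using card_final_pieces_le_levels[OF assms(3,4)] .
  show "finite (final_pieces P r \<delta> a0 b0)"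
    by (rule fin)
  have "1 \<le> card P"
    using assms(1,2) by (simp add: Suc_le_eq card_gt_0_iff)
  moreover have "2 \<le> 4 / \<delta> + 2"
    using assms(4) by simp
  ultimately have A: "2 * 1 * 2 \<le> A"
    unfolding A_def by (intro mult_mono) auto
  have "real (card (final_pieces P r \<delta> a0 b0)) \<le> (\<Sum>k\<le>N. real (card (level_indices k)))"
    using card by (metis of_nat_le_iff of_nat_sum)
  also have "\<dots> \<le> A * (2 + max 0 (log 2 (B / A) + 1))"
  proof (rule sum_le_capped_powers_of_two)
    show "0 < A"
      using A by simp
    show "real (card (level_indices k)) \<le> 2^k" for k
      using card_level_indices_le by (metis of_nat_le_iff of_nat_numeral of_nat_power)
    show "real (card (level_indices k)) \<le> (if 2^k < B then A else 0)" if "A < 2^k" for k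
    proof (cases k)
      case (Suc k')
      show ?thesis
        unfolding Suc A_def B_def by (rule card_level_indices_Suc_le[OF assms(1,3,4)])
    qed (use A that in simp)
  qed
  finally show "real (card (final_pieces P r \<delta> a0 b0)) \<le> A * (2 + max 0 (log 2 (B / A) + 1))" .
qed

end

lemma ln_inverse_bounds:
  fixes \<delta> :: real
  assumes "0 < \<delta>" "\<delta> \<le> 1/2"
  shows "ln 2 \<le> ln (1 / \<delta>)" "3 + (1 + ln (1 / \<delta>)) / ln 2 \<le> 12 * ln (1 / \<delta>)"
proof -
  show ln: "ln 2 \<le> ln (1 / \<delta>)"
    using assms by (simp add: ln_le_cancel_iff field_simps)
  have "(1 + ln (1 / \<delta>)) / ln 2 \<le> (1 + ln (1 / \<delta>)) / (2/3)"
    using ln ln2_ge_two_thirds by (intro divide_left_mono) auto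
  also have "\<dots> = 3/2 + 3/2 * ln (1 / \<delta>)"
    by simp
  finally show "3 + (1 + ln (1 / \<delta>)) / ln 2 \<le> 12 * ln (1 / \<delta>)"
    using ln ln2_ge_two_thirds by linarith
qed

lemma log2_le_add_ln_inverse:
  assumes "0 \<le> y" "y \<le> x / \<delta>" "0 < \<delta>" "\<delta> \<le> 1"
  shows "log 2 y \<le> (x + ln (1 / \<delta>)) / ln 2"
proof (cases "y = 0")
  case True
  \<comment> \<open>log 2 0 = 0\<close>
  have "0 \<le> x"
    using order_trans[OF assms(1,2)] assms(3) by (simp add: zero_le_divide_iff)
  with True assms(3,4) show ?thesis
    by (simp add: log_def)
next
  case False
  then have y: "0 < y" "0 < x"
    using assms(1) order_less_le_trans[of 0 y "x / \<delta>"] assms(2,3) by (auto simp: zero_less_divide_iff)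
  have "log 2 y \<le> ln (x / \<delta>) / ln 2"
    using y assms(2) by (simp add: log_def divide_right_mono)
  also have "ln (x / \<delta>) = ln x + ln (1 / \<delta>)"
    using y assms(3) by (simp add: ln_div)
  also have "ln x \<le> x"
    using ln_le_minus_one[OF y(2)] by simp
  finally show ?thesis
    by (simp add: divide_right_mono)
qed

lemma card_final_pieces_le:
  fixes P :: "(real^2) set" and a0 b0 :: "real^2"
  assumes P: "finite P" "card P = n" and nm: "1 \<le> n" "1 \<le> m" and \<delta>: "0 < \<delta>" "\<delta> \<le> 1/2"
  defines "r \<equiv> \<delta> / (real n * real m)"
  shows "finite (final_pieces P r \<delta> a0 b0)"
    and "real (card (final_pieces P r \<delta> a0 b0))
           \<le> 10 * real n / \<delta> * (3 + (real m * dist a0 b0 + ln (1 / \<delta>)) / ln 2)"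
proof -
  define A where "A = 2 * real (card P) * (4 / \<delta> + 2)"
  define B where "B = 2 * (1 + \<delta>) * dist a0 b0 / (r * \<delta>)"
  define L where "L = dist a0 b0"
  define lg where "lg = ln (1 / \<delta>)"
  have "P \<noteq> {}" "0 < r"
    using P nm \<delta> by (auto simp: r_def)
  note bound = final_pieces_bound[OF P(1) this \<delta>(1), of a0 b0]
  then show "finite (final_pieces P r \<delta> a0 b0)"
    by blast
  have "0 < 4 / \<delta> + 2"
    using \<delta> by (simp add: add_pos_pos)
  then have "0 < A"
    using P nm by (simp add: A_def)
  moreover have "A \<le> 10 * real n / \<delta>"
  proof -
    have "real n * (2 * \<delta>) \<le> real n * 1"
      using \<delta> by (intro mult_left_mono) auto
    then show ?thesis
      using P \<delta> by (simp add: A_def field_simps)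
  qed
  ultimately have A: "0 < A" "A \<le> 10 * real n / \<delta>" .
  have lg: "0 \<le> lg"
    using ln_inverse_bounds[OF \<delta>] ln_gt_zero[of 2] unfolding lg_def by linarith
  define c where "c = 2 * real n * real m * L / \<delta>^2"
  have "0 \<le> c"
    by (simp add: c_def L_def)
  have "B = (1 + \<delta>) * c"
    using nm \<delta> by (simp add: B_def r_def c_def L_def field_simps power2_eq_square)
  also have "\<dots> \<le> (4 + 2 * \<delta>) * c"
    using \<open>0 \<le> c\<close> \<delta> by (intro mult_right_mono) auto
  also have "\<dots> = real m * L / \<delta> * A"
    using P nm \<delta> by (simp add: A_def c_def field_simps power2_eq_square)
  finally have "log 2 (B / A) \<le> (real m * L + lg) / ln 2"
    using A \<open>0 \<le> c\<close> \<delta> \<open>B = (1 + \<delta>) * c\<close> unfolding lg_def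
    by (intro log2_le_add_ln_inverse) (simp_all add: pos_divide_le_eq L_def)
  moreover have nonneg: "0 \<le> (real m * L + lg) / ln 2"
    using lg by (simp add: L_def)
  ultimately have "max 0 (log 2 (B / A) + 1) \<le> (real m * L + lg) / ln 2 + 1"
    by simp
  then have "A * (2 + max 0 (log 2 (B / A) + 1)) \<le> A * (3 + (real m * L + lg) / ln 2)"
    using A by (intro mult_left_mono) auto
  also have "\<dots> \<le> 10 * real n / \<delta> * (3 + (real m * L + lg) / ln 2)"
    using A nonneg by (intro mult_right_mono) auto
  finally show "real (card (final_pieces P r \<delta> a0 b0))
                  \<le> 10 * real n / \<delta> * (3 + (real m * dist a0 b0 + ln (1 / \<delta>)) / ln 2)"
    using bound(2) unfolding A_def B_def L_def lg_def by linarith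
qed

lemma card_subdivision_le:
  fixes p a b :: "nat \<Rightarrow> real^2"
  assumes n: "1 \<le> n" and m: "1 \<le> m" and p: "inj_on p {..<n}"
    and length: "(\<Sum>j<m. dist (a j) (b j)) = 1" and \<delta>: "0 < \<delta>" "\<delta> \<le> 1/2"
  shows "\<forall>j<m. finite (final_pieces (p ` {..<n}) (\<delta> / (real n * real m)) \<delta> (a j) (b j))"
    and "real (\<Sum>j<m. card (final_pieces (p ` {..<n}) (\<delta> / (real n * real m)) \<delta> (a j) (b j)))
           \<le> 120 * (real n * real m / \<delta>) * ln (1 / \<delta>)"
proof -
  have P: "finite (p ` {..<n})" "card (p ` {..<n}) = n"
    using p by (simp_all add: card_image)
  note segment_bound = card_final_pieces_le[OF P n m \<delta>]
  show "\<forall>j<m. finite (final_pieces (p ` {..<n}) (\<delta> / (real n * real m)) \<delta> (a j) (b j))"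
    using segment_bound(1) by blast
  let ?lg = "ln (1 / \<delta>)"
  have "real (\<Sum>j<m. card (final_pieces (p ` {..<n}) (\<delta> / (real n * real m)) \<delta> (a j) (b j)))
          \<le> (\<Sum>j<m. 10 * real n / \<delta> * (3 + (real m * dist (a j) (b j) + ?lg) / ln 2))"
    unfolding of_nat_sum using segment_bound(2) by (rule sum_mono)
  also have "\<dots> = 10 * real n * real m / \<delta> * (3 + (1 + ?lg) / ln 2)"
    using length by (simp add: sum_distrib_left[symmetric] sum.distrib sum_divide_distrib[symmetric] field_simps)
  also have "\<dots> \<le> 10 * real n * real m / \<delta> * (12 * ?lg)"
    using ln_inverse_bounds(2)[OF \<delta>] \<delta> by (intro mult_left_mono) auto
  finally show "real (\<Sum>j<m. card (final_pieces (p ` {..<n}) (\<delta> / (real n * real m)) \<delta> (a j) (b j)))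
                  \<le> 120 * (real n * real m / \<delta>) * ?lg"
    by simp
qed

theorem lemma5:
  shows "\<exists>C>0. \<forall>(n::nat) (m::nat) (p::nat \<Rightarrow> real^2) (w::nat \<Rightarrow> real) (a::nat \<Rightarrow> real^2) (b::nat \<Rightarrow> real^2) (\<delta>::real).
     n \<ge> 1 \<longrightarrow> m \<ge> 1 \<longrightarrow>
     inj_on p {..<n} \<longrightarrow> (\<forall>i<n. w i \<ge> 0) \<longrightarrow> (\<Sum>i<n. w i) = 1 \<longrightarrow>
     inj_on (\<lambda>j. closed_segment (a j) (b j)) {..<m} \<longrightarrow>
     (\<Sum>j<m. dist (a j) (b j)) = 1 \<longrightarrow>
     0 < \<delta> \<longrightarrow> \<delta> \<le> 1/2 \<longrightarrow>
     (\<forall>j<m. finite (final_pieces (p ` {..<n}) (\<delta> / (real n * real m)) \<delta> (a j) (b j))) \<and>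
     real (\<Sum>j<m. card (final_pieces (p ` {..<n}) (\<delta> / (real n * real m)) \<delta> (a j) (b j)))
       \<le> C * (real n * real m / \<delta>) * ln (1 / \<delta>)"
  using card_subdivision_le by (intro exI[of _ "120::real"] conjI) (simp, blast)

end
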